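(* Let $H$ be a separated labeled hypergraph whose 1-skeleton is connected and contains an odd cycle. Then $\mathcal A[H]=k[H]$ if and only if at least one of the following holds: (1) $H$ has an odd number of vertices; (2) $H$ has an edge of even dimension, i.e., an edge with an odd number of vertices.
   Context: Let $k$ be a field and $S=k[x_1,\dots,x_n,y]$. For an integral convex polytope $\mathcal P\subseteq\mathbb R^n_{\ge 0}$, the Ehrhart ring $\mathcal A[\mathcal P]$ is the $k$-subspace of $S$ spanned by the monomials $x^{\mathbf a}y^t$ with $t\in\mathbb N$, $\mathbf a\in t\mathcal P\cap\mathbb Z^n$; the polytopal ring is $k[\mathcal P]=k[x^{\mathbf a}y:\mathbf a\in\mathcal P\cap\mathbb Z^n]$. A labeled hypergraph $H=(V,f)$ on a finite set $V$ with alphabet $\{x_1,\dots,x_n\}$ is a function $f:\{x_1,\dots,x_n\}\to\mathcal P(V)$; its edges are the nonempty sets in the image of $f$. $H$ is separated if for all distinct $v,w\in V$ there are edges $F,G$ with $v\in F\setminus G$, $w\in G\setminus F$. For separated $H$, let $x^{\mathbf a_v}=\prod_{x:\,v\in f(x)}x$ for $v\in V$, $\mathcal P_H=\mathrm{conv}\{\mathbf a_v:v\in V\}$, $\mathcal A[H]=\mathcal A[\mathcal P_H]$, $k[H]=k[\mathcal P_H]$. The dimension of an edge $E$ is $|E|-1$. The 1-skeleton of $H$ is the simple graph on $V$ whose edges are the edges of $H$ having exactly two vertices. *)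

theory Defs
  imports "HOL-Analysis.Analysis" "HOL-Library.Poly_Mapping"
begin

(* Variables of S = k[x_1,...,x_n,y]: the alphabet is a finite type 'x (Some x = x_i),
  and None stands for y. *)

type_synonym 'x mono = "'x option \<Rightarrow>\<^sub>0 nat"
type_synonym ('x,'k) spoly = "'x mono \<Rightarrow>\<^sub>0 'k"

definition expo :: "('x::finite \<Rightarrow> nat) \<Rightarrow> nat \<Rightarrow> 'x mono" where
  "expo a t = (\<Sum>i\<in>UNIV. Poly_Mapping.single (Some i) (a i)) + Poly_Mapping.single None t"

definition monom_xy :: "('x::finite \<Rightarrow> nat) \<Rightarrow> nat \<Rightarrow> ('x,'k::field) spoly" where
  "monom_xy a t = Poly_Mapping.single (expo a t) 1"

definition kspan :: "('x,'k::field) spoly set \<Rightarrow> ('x,'k) spoly set" where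
  "kspan M = {p. \<exists>F c. finite F \<and> F \<subseteq> M \<and> p = (\<Sum>m\<in>F. Poly_Mapping.single 0 (c m) * m)}"

inductive_set kalg :: "('x,'k::field) spoly set \<Rightarrow> ('x,'k) spoly set" for G where
  const: "Poly_Mapping.single 0 c \<in> kalg G"
| gen: "g \<in> G \<Longrightarrow> g \<in> kalg G"
| add: "p \<in> kalg G \<Longrightarrow> q \<in> kalg G \<Longrightarrow> p + q \<in> kalg G"
| mult: "p \<in> kalg G \<Longrightarrow> q \<in> kalg G \<Longrightarrow> p * q \<in> kalg G"

definition rpt :: "('x::finite \<Rightarrow> nat) \<Rightarrow> real ^ 'x" where
  "rpt a = (\<chi> i. real (a i))"

(* Ehrhart ring A[P]: span of x^a y^t with a \<in> tP \<inter> Z^n (P \<subseteq> R^n_{\<ge>0}, so a \<in> N^n). *)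
definition ehrhart_ring :: "(real ^ 'x::finite) set \<Rightarrow> ('x,'k::field) spoly set" where
  "ehrhart_ring P = kspan {monom_xy a t | a t. rpt a \<in> (\<lambda>z. real t *\<^sub>R z) ` P}"

definition polytopal_ring :: "(real ^ 'x::finite) set \<Rightarrow> ('x,'k::field) spoly set" where
  "polytopal_ring P = kalg {monom_xy a 1 | a. rpt a \<in> P}"

(* Labeled hypergraph H = (V, f), f : alphabet \<Rightarrow> subsets of V. *)
definition hedges :: "('x \<Rightarrow> 'v set) \<Rightarrow> 'v set set" where
  "hedges f = {f x | x. f x \<noteq> {}}"

definition separated :: "'v set \<Rightarrow> ('x \<Rightarrow> 'v set) \<Rightarrow> bool" where
  "separated V f \<longleftrightarrow> (\<forall>v\<in>V. \<forall>w\<in>V. v \<noteq> w \<longrightarrow>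
      (\<exists>F\<in>hedges f. \<exists>G\<in>hedges f. v \<in> F - G \<and> w \<in> G - F))"

definition avec :: "('x::finite \<Rightarrow> 'v set) \<Rightarrow> 'v \<Rightarrow> real ^ 'x" where
  "avec f v = (\<chi> x. if v \<in> f x then 1 else 0)"

definition polytope_H :: "'v set \<Rightarrow> ('x::finite \<Rightarrow> 'v set) \<Rightarrow> (real ^ 'x) set" where
  "polytope_H V f = convex hull (avec f ` V)"

definition A_H :: "'v set \<Rightarrow> ('x::finite \<Rightarrow> 'v set) \<Rightarrow> ('x,'k::field) spoly set" where
  "A_H V f = ehrhart_ring (polytope_H V f)"

definition kH :: "'v set \<Rightarrow> ('x::finite \<Rightarrow> 'v set) \<Rightarrow> ('x,'k::field) spoly set" where
  "kH V f = polytopal_ring (polytope_H V f)"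

definition skel_adj :: "('x \<Rightarrow> 'v set) \<Rightarrow> 'v \<Rightarrow> 'v \<Rightarrow> bool" where
  "skel_adj f u w \<longleftrightarrow> u \<noteq> w \<and> {u, w} \<in> hedges f"

definition skel_connected :: "'v set \<Rightarrow> ('x \<Rightarrow> 'v set) \<Rightarrow> bool" where
  "skel_connected V f \<longleftrightarrow> V \<noteq> {} \<and>
     (\<forall>v\<in>V. \<forall>w\<in>V. (v, w) \<in> {(u, u'). skel_adj f u u'}\<^sup>*)"

definition skel_has_odd_cycle :: "('x \<Rightarrow> 'v set) \<Rightarrow> bool" where
  "skel_has_odd_cycle f \<longleftrightarrow> (\<exists>vs. distinct vs \<and> length vs \<ge> 3 \<and> odd (length vs) \<and>
     (\<forall>i<length vs. skel_adj f (vs ! i) (vs ! ((i + 1) mod length vs))))"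

end

theory Submission
  imports Defs
begin

(* Both rings are spanned by monomials x^a y^t.  Let M_A be the set of lattice points (a,t)
   of the cone over P_H (a \<in> tP_H) and M_K the monoid generated by the vertex points
   (a_v,1).  Then A[H] is the set of polynomials supported on M_A, and, once we know that
   every lattice point of P_H is a vertex, k[H] is the set supported on M_K.  Hence
   A[H] = k[H] iff M_A = M_K, and the theorem becomes a statement about monoids.

   A point of M_A is a nonnegative real weighting l of V with a_i = \<Sum>_{v\<in>f(x_i)} l(v) and
   t = \<Sum>_V l; it lies in M_K as soon as l can be taken integral.  For a skeleton edge
   {u,w}, l(u)+l(w) is an integer; an odd cycle yields a vertex c with 2l(c) \<in> \<int>, and
   connectivity then forces either l(V) \<subseteq> \<int> or l(V) \<subseteq> 1/2 + \<int>.  In the second case the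
   integral sums over V and over every edge force these sets to have even size.  So
   under (1) or (2) we get M_A = M_K; if instead all of them are even, the uniform weight
   1/2 gives a point of M_A outside M_K. *)


section \<open>Monomials, spans and monomial algebras\<close>

lemma lookup_expo_Some [simp]: "Poly_Mapping.lookup (expo a t) (Some i) = a i"
  unfolding expo_def by (simp add: lookup_add lookup_sum lookup_single when_def)

lemma lookup_expo_None [simp]: "Poly_Mapping.lookup (expo a t) None = t"
  unfolding expo_def by (simp add: lookup_add lookup_sum lookup_single when_def)

lemma inj_expo: "inj (case_prod expo)"
  by (rule injI) (metis lookup_expo_None lookup_expo_Some ext prod.collapse case_prod_beta)

lemma expo_add: "expo a t + expo b s = expo (\<lambda>i. a i + b i) (t + s)"
  unfolding expo_def by (simp only: single_add sum.distrib add_ac)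

lemma expo_zero: "expo (\<lambda>_. 0) 0 = 0"
  unfolding expo_def by simp

lemma monom_xy_mult:
  "(monom_xy a t * monom_xy b s :: ('x::finite,'k::field) spoly) = monom_xy (\<lambda>i. a i + b i) (t + s)"
  unfolding monom_xy_def by (simp add: mult_single expo_add)

lemma inj_unit_monomial: "inj (\<lambda>m. Poly_Mapping.single m (1::'k::field))"
  by (rule injI) (metis lookup_single_eq lookup_single_not_eq one_neq_zero)

lemma monomial_expansion:
  "(p :: ('x,'k::field) spoly) =
     (\<Sum>m\<in>Poly_Mapping.keys p. Poly_Mapping.single 0 (Poly_Mapping.lookup p m) * Poly_Mapping.single m 1)"
proof (rule poly_mapping_eqI)
  fix k
  have "Poly_Mapping.lookup (\<Sum>m\<in>Poly_Mapping.keys p.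
          Poly_Mapping.single 0 (Poly_Mapping.lookup p m) * Poly_Mapping.single m 1) k
      = (\<Sum>m\<in>Poly_Mapping.keys p. (Poly_Mapping.lookup p m when m = k))"
    by (simp add: lookup_sum mult_single lookup_single)
  also have "\<dots> = Poly_Mapping.lookup p k"
    by (cases "k \<in> Poly_Mapping.keys p") (auto simp: when_def in_keys_iff)
  finally show "Poly_Mapping.lookup p k = Poly_Mapping.lookup (\<Sum>m\<in>Poly_Mapping.keys p.
          Poly_Mapping.single 0 (Poly_Mapping.lookup p m) * Poly_Mapping.single m 1) k"
    by simp
qed

lemma kspan_monomials:
  "kspan {Poly_Mapping.single m (1::'k::field) | m. m \<in> Z} = {p :: ('x,'k) spoly. Poly_Mapping.keys p \<subseteq> Z}"
proof (intro set_eqI iffI)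
  fix p :: "('x,'k) spoly"
  assume "p \<in> kspan {Poly_Mapping.single m 1 | m. m \<in> Z}"
  then obtain F c where F: "F \<subseteq> {Poly_Mapping.single m 1 | m. m \<in> Z}"
    and p: "p = (\<Sum>m\<in>F. Poly_Mapping.single 0 (c m) * m)"
    unfolding kspan_def by auto
  have "Poly_Mapping.keys p \<subseteq> (\<Union>m\<in>F. Poly_Mapping.keys (Poly_Mapping.single 0 (c m) * m))"
    unfolding p by (rule keys_sum)
  also have "\<dots> \<subseteq> Z"
    using F by (auto simp: mult_single split: if_splits)
  finally show "p \<in> {p. Poly_Mapping.keys p \<subseteq> Z}" by simp
next
  fix p :: "('x,'k) spoly"
  assume "p \<in> {p. Poly_Mapping.keys p \<subseteq> Z}"
  define e :: "'x mono \<Rightarrow> ('x,'k) spoly" where "e = (\<lambda>m. Poly_Mapping.single m 1)"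
  define c where "c = (\<lambda>q. Poly_Mapping.lookup p (inv e q))"
  have inj: "inj e" unfolding e_def by (rule inj_unit_monomial)
  have "(\<Sum>q\<in>e ` Poly_Mapping.keys p. Poly_Mapping.single 0 (c q) * q)
      = (\<Sum>m\<in>Poly_Mapping.keys p. Poly_Mapping.single 0 (c (e m)) * e m)"
    by (rule sum.reindex[OF inj_on_subset[OF inj subset_UNIV], unfolded comp_def])
  also have "\<dots> = p"
  proof -
    have "c (e m) = Poly_Mapping.lookup p m" for m by (simp add: c_def inv_f_f[OF inj])
    then show ?thesis unfolding e_def by (simp flip: monomial_expansion)
  qed
  finally have "p = (\<Sum>q\<in>e ` Poly_Mapping.keys p. Poly_Mapping.single 0 (c q) * q)"
    by (rule sym)
  moreover have "e ` Poly_Mapping.keys p \<subseteq> {Poly_Mapping.single m 1 | m. m \<in> Z}"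
    using \<open>p \<in> {p. Poly_Mapping.keys p \<subseteq> Z}\<close> by (auto simp: e_def)
  ultimately show "p \<in> kspan {Poly_Mapping.single m 1 | m. m \<in> Z}"
    unfolding kspan_def by (intro CollectI exI[of _ "e ` Poly_Mapping.keys p"] exI[of _ c]) simp
qed

lemma supported_polys_eq_iff:
  "({p :: ('x,'k::field) spoly. Poly_Mapping.keys p \<subseteq> A} = {p. Poly_Mapping.keys p \<subseteq> B}) \<longleftrightarrow> A = B"
proof
  assume eq: "{p :: ('x,'k) spoly. Poly_Mapping.keys p \<subseteq> A} = {p. Poly_Mapping.keys p \<subseteq> B}"
  have "m \<in> A \<longleftrightarrow> m \<in> B" for m
    using eq[THEN equalityD1, THEN subsetD, of "Poly_Mapping.single m 1"]
          eq[THEN equalityD2, THEN subsetD, of "Poly_Mapping.single m 1"] by auto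
  then show "A = B" by blast
qed simp

lemma kalg_sum: "(\<And>m. m \<in> F \<Longrightarrow> g m \<in> kalg G) \<Longrightarrow> sum g F \<in> kalg G"
proof (induction F rule: infinite_finite_induct)
  case (infinite F)
  then show ?case using kalg.const[of 0 G] by simp
next
  case empty
  then show ?case using kalg.const[of 0 G] by simp
next
  case (insert x F)
  then show ?case by (simp add: kalg.add)
qed

lemma kalg_monomials:
  fixes G :: "('x,'k::field) spoly set"
  assumes zero: "0 \<in> M" and plus: "\<And>m n. m \<in> M \<Longrightarrow> n \<in> M \<Longrightarrow> m + n \<in> M"
    and gens: "\<And>g. g \<in> G \<Longrightarrow> \<exists>m\<in>M. g = Poly_Mapping.single m 1"
    and monomials: "\<And>m. m \<in> M \<Longrightarrow> Poly_Mapping.single m 1 \<in> kalg G"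
  shows "kalg G = {p. Poly_Mapping.keys p \<subseteq> M}"
proof (intro set_eqI iffI)
  fix p :: "('x,'k) spoly"
  assume "p \<in> kalg G"
  then show "p \<in> {p. Poly_Mapping.keys p \<subseteq> M}"
  proof (induction rule: kalg.induct)
    case (const c)
    then show ?case using zero by simp
  next
    case (gen g)
    then show ?case using gens by fastforce
  next
    case (add p q)
    then show ?case using keys_add[of p q] by blast
  next
    case (mult p q)
    then show ?case using keys_mult[of p q] plus by blast
  qed
next
  fix p :: "('x,'k) spoly"
  assume "p \<in> {p. Poly_Mapping.keys p \<subseteq> M}"
  then have "(\<Sum>m\<in>Poly_Mapping.keys p.
      Poly_Mapping.single 0 (Poly_Mapping.lookup p m) * Poly_Mapping.single m 1) \<in> kalg G"
    by (auto intro!: kalg_sum kalg.mult[OF kalg.const] monomials)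
  then show "p \<in> kalg G" using monomial_expansion[of p] by simp
qed


section \<open>The cone monoid and the vertex monoid\<close>

definition vertex_exp :: "('x \<Rightarrow> 'v set) \<Rightarrow> 'v \<Rightarrow> 'x \<Rightarrow> nat" where
  "vertex_exp f v = (\<lambda>i. if v \<in> f i then 1 else 0)"

lemma rpt_vertex_exp: "rpt (vertex_exp f v) = avec f v"
  by (simp add: rpt_def avec_def vertex_exp_def vec_eq_iff)

inductive_set vertex_monoid :: "'v set \<Rightarrow> ('x \<Rightarrow> 'v set) \<Rightarrow> (('x \<Rightarrow> nat) \<times> nat) set"
  for V f where
  zero: "((\<lambda>_. 0), 0) \<in> vertex_monoid V f"
| step: "(a, t) \<in> vertex_monoid V f \<Longrightarrow> v \<in> V \<Longrightarrow>
           ((\<lambda>i. a i + vertex_exp f v i), Suc t) \<in> vertex_monoid V f"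

definition cone_points :: "'v set \<Rightarrow> ('x::finite \<Rightarrow> 'v set) \<Rightarrow> (('x \<Rightarrow> nat) \<times> nat) set" where
  "cone_points V f = {(a, t). rpt a \<in> (\<lambda>z. real t *\<^sub>R z) ` polytope_H V f}"

definition real_weights ::
    "'v set \<Rightarrow> ('x \<Rightarrow> 'v set) \<Rightarrow> ('x \<Rightarrow> nat) \<Rightarrow> nat \<Rightarrow> ('v \<Rightarrow> real) \<Rightarrow> bool" where
  "real_weights V f a t l \<longleftrightarrow> (\<forall>v\<in>V. 0 \<le> l v) \<and> (\<Sum>v\<in>V. l v) = real t \<and>
     (\<forall>i. real (a i) = (\<Sum>v\<in>f i. l v))"

lemma vertex_monoid_add:
  "(b, s) \<in> vertex_monoid V f \<Longrightarrow> (a, t) \<in> vertex_monoid V f \<Longrightarrow>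
     ((\<lambda>i. a i + b i), t + s) \<in> vertex_monoid V f"
proof (induction rule: vertex_monoid.induct)
  case (step b s v)
  then have "((\<lambda>i. (a i + b i) + vertex_exp f v i), Suc (t + s)) \<in> vertex_monoid V f"
    by (intro vertex_monoid.step) auto
  then show ?case by (simp add: add.assoc)
qed simp

lemma vertex_monoid_repeat:
  "(a, t) \<in> vertex_monoid V f \<Longrightarrow> v \<in> V \<Longrightarrow>
     ((\<lambda>i. a i + n * vertex_exp f v i), t + n) \<in> vertex_monoid V f"
proof (induction n)
  case (Suc n)
  then have "((\<lambda>i. (a i + n * vertex_exp f v i) + vertex_exp f v i), Suc (t + n)) \<in> vertex_monoid V f"
    by (intro vertex_monoid.step) auto
  then show ?case by (simp add: algebra_simps)
qed simp

lemma nat_weights_vertex_monoid: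
  assumes "finite W" "W \<subseteq> V"
  shows "((\<lambda>i. \<Sum>v\<in>f i \<inter> W. \<mu> v), \<Sum>v\<in>W. \<mu> v) \<in> vertex_monoid V f"
  using assms
proof (induction W rule: finite_induct)
  case empty
  then show ?case using vertex_monoid.zero by simp
next
  case (insert x W)
  then have "((\<lambda>i. (\<Sum>v\<in>f i \<inter> W. \<mu> v) + \<mu> x * vertex_exp f x i), (\<Sum>v\<in>W. \<mu> v) + \<mu> x)
      \<in> vertex_monoid V f"
    by (intro vertex_monoid_repeat) auto
  moreover have "(\<Sum>v\<in>f i \<inter> insert x W. \<mu> v) = (\<Sum>v\<in>f i \<inter> W. \<mu> v) + \<mu> x * vertex_exp f x i" for i
    using insert by (cases "x \<in> f i") (simp_all add: vertex_exp_def Int_insert_left)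
  ultimately show ?case using insert by (simp add: add.commute)
qed

lemma vertex_monoid_iff:
  assumes fin: "finite V" and sub: "\<forall>x. f x \<subseteq> V"
  shows "(a, t) \<in> vertex_monoid V f \<longleftrightarrow>
           (\<exists>\<mu>. a = (\<lambda>i. \<Sum>v\<in>f i. \<mu> v) \<and> t = (\<Sum>v\<in>V. \<mu> v))"
proof
  assume "(a, t) \<in> vertex_monoid V f"
  then show "\<exists>\<mu>. a = (\<lambda>i. \<Sum>v\<in>f i. \<mu> v) \<and> t = (\<Sum>v\<in>V. \<mu> v)"
  proof (induction rule: vertex_monoid.induct)
    case zero
    then show ?case by (intro exI[of _ "\<lambda>_. 0"]) simp
  next
    case (step a t v)
    then obtain \<mu> where \<mu>: "a = (\<lambda>i. \<Sum>v\<in>f i. \<mu> v)" "t = (\<Sum>v\<in>V. \<mu> v)" by blast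
    define \<mu>' where "\<mu>' = (\<lambda>w. \<mu> w + (if w = v then 1 else 0 :: nat))"
    have "finite (f i)" for i using fin sub finite_subset by blast
    then have "a i + vertex_exp f v i = (\<Sum>w\<in>f i. \<mu>' w)" for i
      using \<mu>(1) by (simp add: \<mu>'_def sum.distrib vertex_exp_def)
    moreover have "Suc t = (\<Sum>w\<in>V. \<mu>' w)"
      using \<mu>(2) fin step(2) by (simp add: \<mu>'_def sum.distrib)
    ultimately show ?case by blast
  qed
next
  assume "\<exists>\<mu>. a = (\<lambda>i. \<Sum>v\<in>f i. \<mu> v) \<and> t = (\<Sum>v\<in>V. \<mu> v)"
  then obtain \<mu> where "a = (\<lambda>i. \<Sum>v\<in>f i \<inter> V. \<mu> v)" "t = (\<Sum>v\<in>V. \<mu> v)"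
    using sub by (auto simp: Int_absorb2)
  then show "(a, t) \<in> vertex_monoid V f"
    using nat_weights_vertex_monoid[OF fin order_refl, where f=f and \<mu>=\<mu>] by simp
qed

lemma sum_over_edge:
  assumes "finite V" "f i \<subseteq> V"
  shows "(\<Sum>v\<in>V. (l v :: real) * (if v \<in> f i then 1 else 0)) = (\<Sum>v\<in>f i. l v)"
proof -
  have "(\<Sum>v\<in>f i. l v) = (\<Sum>v\<in>V. if v \<in> f i then l v else 0)"
    using sum.inter_restrict[OF assms(1), of l "f i"] assms(2) by (simp add: Int_absorb1)
  then show ?thesis by (simp add: if_distrib cong: if_cong)
qed

(* A real weighting of V yields a lattice point of the cone: rescale it to a convex combination. *)
lemma real_weights_cone_point:
  assumes fin: "finite V" and sub: "\<forall>x. f x \<subseteq> V" and ne: "V \<noteq> {}"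
    and w: "real_weights V f a t l"
  shows "(a, t) \<in> cone_points V f"
proof (cases "t = 0")
  case True
  then have "\<forall>v\<in>V. l v = 0" using w sum_nonneg_eq_0_iff[OF fin] by (auto simp: real_weights_def)
  then have a0: "a i = 0" for i using w sub unfolding real_weights_def
    by (metis (no_types, lifting) of_nat_eq_0_iff subsetD sum.neutral)
  obtain v0 where "v0 \<in> V" using ne by blast
  then have "avec f v0 \<in> polytope_H V f" unfolding polytope_H_def by (simp add: hull_inc)
  moreover have "rpt a = real t *\<^sub>R avec f v0" using True a0 by (simp add: rpt_def vec_eq_iff)
  ultimately show ?thesis unfolding cone_points_def by auto
next
  case False
  define z where "z = (\<Sum>v\<in>V. (l v / real t) *\<^sub>R avec f v)"
  have "z \<in> polytope_H V f" unfolding z_def polytope_H_def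
  proof (rule convex_sum[OF fin convex_convex_hull])
    show "(\<Sum>v\<in>V. l v / real t) = 1"
      using False w by (simp add: real_weights_def sum_divide_distrib[symmetric])
    show "\<And>v. v \<in> V \<Longrightarrow> 0 \<le> l v / real t" using w by (simp add: real_weights_def)
  qed (simp add: hull_inc)
  moreover have "rpt a = real t *\<^sub>R z"
  proof -
    have "(real t *\<^sub>R z) $ i = (\<Sum>v\<in>V. l v * (if v \<in> f i then 1 else 0))" for i
      using False by (simp add: z_def avec_def sum_distrib_left)
    then show ?thesis
      using w sum_over_edge[OF fin, of f _ l] sub by (simp add: real_weights_def rpt_def vec_eq_iff)
  qed
  ultimately show ?thesis unfolding cone_points_def by auto
qed

(* Separation makes the vertex points distinct, so a convex combination of them is a weighting of V. *)
lemma avec_inj: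
  assumes "separated V f"
  shows "inj_on (avec f) V"
proof (rule inj_onI, rule ccontr)
  fix v w assume vw: "v \<in> V" "w \<in> V" "avec f v = avec f w" "v \<noteq> w"
  then obtain x where "v \<in> f x" "w \<notin> f x"
    using assms unfolding separated_def hedges_def by blast
  then have "avec f v $ x \<noteq> avec f w $ x" by (simp add: avec_def)
  then show False using vw by simp
qed

lemma cone_point_real_weights:
  assumes fin: "finite V" and sub: "\<forall>x. f x \<subseteq> V" and sep: "separated V f"
    and at: "(a, t) \<in> cone_points V f"
  shows "\<exists>l. real_weights V f a t l"
proof -
  obtain z where z: "z \<in> polytope_H V f" "rpt a = real t *\<^sub>R z"
    using at unfolding cone_points_def by auto
  have finS: "finite (avec f ` V)" using fin by simp
  obtain u where u: "\<forall>x\<in>avec f ` V. 0 \<le> u x" "sum u (avec f ` V) = 1"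
      "(\<Sum>x\<in>avec f ` V. u x *\<^sub>R x) = z"
    using z(1) unfolding polytope_H_def convex_hull_finite[OF finS] by blast
  have inj: "inj_on (avec f) V" by (rule avec_inj[OF sep])
  define l where "l = (\<lambda>v. real t * u (avec f v))"
  have "(\<Sum>v\<in>V. u (avec f v)) = 1" using u(2) sum.reindex[OF inj, of u] by simp
  then have "(\<Sum>v\<in>V. l v) = real t" by (simp add: l_def sum_distrib_left[symmetric])
  moreover have "\<forall>v\<in>V. 0 \<le> l v" using u(1) by (simp add: l_def)
  moreover have "real (a i) = (\<Sum>v\<in>f i. l v)" for i
  proof -
    have zV: "z = (\<Sum>v\<in>V. u (avec f v) *\<^sub>R avec f v)"
      using u(3) sum.reindex[OF inj, of "\<lambda>x. u x *\<^sub>R x"] by simp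
    have "real (a i) = rpt a $ i" by (simp add: rpt_def)
    also have "\<dots> = (\<Sum>v\<in>V. l v * (if v \<in> f i then 1 else 0))"
      using z(2) by (simp add: zV l_def sum_distrib_left avec_def mult.assoc)
    also have "\<dots> = (\<Sum>v\<in>f i. l v)" using sum_over_edge[OF fin, of f i l] sub by blast
    finally show ?thesis .
  qed
  ultimately show ?thesis unfolding real_weights_def by blast
qed

lemma vertex_monoid_cone_points:
  assumes "finite V" "\<forall>x. f x \<subseteq> V" "V \<noteq> {}"
  shows "vertex_monoid V f \<subseteq> cone_points V f"
proof clarify
  fix a t assume "(a, t) \<in> vertex_monoid V f"
  then obtain \<mu> where "a = (\<lambda>i. \<Sum>v\<in>f i. \<mu> v)" "t = (\<Sum>v\<in>V. \<mu> v)"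
    using vertex_monoid_iff[OF assms(1,2)] by blast
  then have "real_weights V f a t (\<lambda>v. real (\<mu> v))" by (simp add: real_weights_def)
  then show "(a, t) \<in> cone_points V f" by (rule real_weights_cone_point[OF assms])
qed


section \<open>Parity of weights along the 1-skeleton\<close>

definition half_odd :: "real \<Rightarrow> bool" where
  "half_odd x \<longleftrightarrow> (\<exists>k::int. odd k \<and> 2 * x = of_int k)"

lemma skel_adj_edge: "skel_adj f u w \<Longrightarrow> \<exists>i. f i = {u, w} \<and> u \<noteq> w"
  unfolding skel_adj_def hedges_def by auto

lemma skel_adj_in_V: "\<forall>x. f x \<subseteq> V \<Longrightarrow> skel_adj f u w \<Longrightarrow> u \<in> V \<and> w \<in> V"
  using skel_adj_edge by (metis insert_subset)

lemma alternating_sum: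
  "(\<Sum>j<n. (-1::real) ^ j * (g j + g (Suc j))) = g 0 - (-1) ^ n * g n"
  by (induction n) (simp_all add: algebra_simps)

(* If h(u)+h(w) is an integer along every skeleton edge, the alternating sum around an odd
   cycle shows 2h(c) \<in> \<int> for a vertex c of the cycle. *)
lemma odd_cycle_half_integral:
  fixes h :: "'v \<Rightarrow> real"
  assumes sub: "\<forall>x. f x \<subseteq> V" and cyc: "skel_has_odd_cycle f"
    and H: "\<And>u w. skel_adj f u w \<Longrightarrow> h u + h w \<in> \<int>"
  shows "\<exists>c\<in>V. 2 * h c \<in> \<int>"
proof -
  obtain vs where vs: "length vs \<ge> 3" "odd (length vs)"
    "\<forall>i<length vs. skel_adj f (vs ! i) (vs ! ((i + 1) mod length vs))"
    using cyc unfolding skel_has_odd_cycle_def by blast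
  define n where "n = length vs"
  define g where "g = (\<lambda>j. h (vs ! (j mod n)))"
  have n0: "n > 0" using vs n_def by auto
  have "(\<Sum>j<n. (-1::real) ^ j * (g j + g (Suc j))) \<in> \<int>"
  proof (rule Ints_sum)
    fix j assume "j \<in> {..<n}"
    then have "g j + g (Suc j) \<in> \<int>" using H vs(3) by (simp add: g_def n_def)
    then show "(-1::real) ^ j * (g j + g (Suc j)) \<in> \<int>" by (intro Ints_mult Ints_power) auto
  qed
  moreover have "(\<Sum>j<n. (-1::real) ^ j * (g j + g (Suc j))) = 2 * h (vs ! 0)"
  proof -
    have "g n = g 0" "g 0 = h (vs ! 0)" by (simp_all add: g_def)
    moreover have "(-1::real) ^ n = -1" using vs(2) n_def by simp
    ultimately show ?thesis by (simp add: alternating_sum)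
  qed
  moreover have "vs ! 0 \<in> V" using vs(3) n0 skel_adj_in_V[OF sub] n_def by blast
  ultimately show ?thesis by auto
qed

lemma skeleton_path_difference:
  fixes h :: "'v \<Rightarrow> real"
  assumes H: "\<And>u w. skel_adj f u w \<Longrightarrow> h u + h w \<in> \<int>"
    and c: "2 * h c \<in> \<int>"
    and path: "(c, v) \<in> {(u, u'). skel_adj f u u'}\<^sup>*"
  shows "h v - h c \<in> \<int>"
  using path
proof (induction rule: rtrancl_induct)
  case (step y z)
  then have "h y + h z \<in> \<int>" using H by simp
  then have "(h y + h z) - (h y - h c) - 2 * h c \<in> \<int>" using step c by (metis Ints_diff)
  then show ?case by (simp add: algebra_simps)
qed simp

lemma skeleton_parity:
  fixes h :: "'v \<Rightarrow> real"
  assumes sub: "\<forall>x. f x \<subseteq> V" and conn: "skel_connected V f" and cyc: "skel_has_odd_cycle f"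
    and H: "\<And>u w. skel_adj f u w \<Longrightarrow> h u + h w \<in> \<int>"
  shows "(\<forall>v\<in>V. h v \<in> \<int>) \<or> (\<forall>v\<in>V. half_odd (h v))"
proof -
  obtain c where c: "c \<in> V" "2 * h c \<in> \<int>" using odd_cycle_half_integral[where h=h, OF sub cyc H] by blast
  obtain k where k: "2 * h c = of_int k" using c(2) by (auto elim: Ints_cases)
  have diff: "h v - h c \<in> \<int>" if "v \<in> V" for v
    using conn c(1) that unfolding skel_connected_def by (blast intro: skeleton_path_difference[where h=h and f=f, OF H c(2)])
  show ?thesis
  proof (cases "even k")
    case True
    then obtain m where "h c = of_int m" using k by (auto elim!: evenE)
    then have hc: "h c \<in> \<int>" by simp
    have "(h v - h c) + h c \<in> \<int>" if "v \<in> V" for v by (rule Ints_add[OF diff[OF that] hc])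
    then show ?thesis by simp
  next
    case False
    have "half_odd (h v)" if v: "v \<in> V" for v
    proof -
      obtain m where "h v - h c = of_int m" using diff[OF v] by (auto elim: Ints_cases)
      then have "2 * h v = of_int (2 * m + k)" using k by (simp add: algebra_simps)
      then show ?thesis using False unfolding half_odd_def by (intro exI[of _ "2 * m + k"]) simp
    qed
    then show ?thesis by blast
  qed
qed

lemma half_odd_sum:
  assumes "finite W" "\<forall>v\<in>W. half_odd (l v)"
  shows "\<exists>K::int. 2 * (\<Sum>v\<in>W. l v) = of_int K \<and> (even K \<longleftrightarrow> even (card W))"
  using assms
proof (induction W rule: finite_induct)
  case empty
  then show ?case by (intro exI[of _ 0]) simp
next
  case (insert x W)
  then obtain K where K: "2 * (\<Sum>v\<in>W. l v) = of_int K" "even K \<longleftrightarrow> even (card W)" by auto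
  obtain k where k: "odd k" "2 * l x = of_int k" using insert by (auto simp: half_odd_def)
  have "2 * (\<Sum>v\<in>insert x W. l v) = of_int (K + k)" using insert K k by (simp add: algebra_simps)
  moreover have "even (K + k) \<longleftrightarrow> even (card (insert x W))" using insert K k by auto
  ultimately show ?case by blast
qed

lemma half_odd_integral_sum_even:
  assumes "finite W" "\<forall>v\<in>W. half_odd (l v)" "(\<Sum>v\<in>W. l v) = real N"
  shows "even (card W)"
proof -
  obtain K where K: "2 * (\<Sum>v\<in>W. l v) = of_int K" "even K \<longleftrightarrow> even (card W)"
    using half_odd_sum[OF assms(1,2)] by blast
  then have "K = 2 * int N" using assms(3) by (simp flip: of_int_eq_iff)
  then show ?thesis using K by simp
qed

lemma half_odd_nonneg_ge:
  assumes "half_odd x" "0 \<le> x"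
  shows "1/2 \<le> x"
proof -
  obtain k :: int where k: "odd k" "2 * x = of_int k" using assms(1) unfolding half_odd_def by blast
  then have "k \<noteq> 0" by auto
  moreover have "0 \<le> k" using k(2) assms(2) by (simp flip: of_int_0_le_iff)
  ultimately have "1 \<le> real_of_int k" by simp
  then show ?thesis using k(2) by simp
qed


section \<open>Comparing the two monoids\<close>

lemma skel_connected_nonempty: "skel_connected V f \<Longrightarrow> V \<noteq> {}"
  unfolding skel_connected_def by simp

lemma card_ge_3_of_odd_cycle:
  assumes "\<forall>x. f x \<subseteq> V" "finite V" "skel_has_odd_cycle f"
  shows "card V \<ge> 3"
proof -
  obtain vs where vs: "distinct vs" "length vs \<ge> 3"
    "\<forall>i<length vs. skel_adj f (vs ! i) (vs ! ((i + 1) mod length vs))"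
    using assms(3) unfolding skel_has_odd_cycle_def by blast
  have "set vs \<subseteq> V"
  proof
    fix x assume "x \<in> set vs"
    then obtain i where "i < length vs" "x = vs ! i" by (auto simp: in_set_conv_nth)
    then show "x \<in> V" using vs(3) skel_adj_in_V[OF assms(1)] by blast
  qed
  then have "card (set vs) \<le> card V" using assms(2) by (simp add: card_mono)
  then show ?thesis using vs distinct_card by fastforce
qed

lemma integral_weights_vertex_monoid:
  assumes fin: "finite V" and sub: "\<forall>x. f x \<subseteq> V"
    and w: "real_weights V f a t l" and int: "\<forall>v\<in>V. l v \<in> \<int>"
  shows "(a, t) \<in> vertex_monoid V f"
proof -
  define \<mu> where "\<mu> = (\<lambda>v. nat \<lfloor>l v\<rfloor>)"
  have \<mu>: "l v = real (\<mu> v)" if "v \<in> V" for v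
    using int w that unfolding \<mu>_def real_weights_def by (auto elim!: Ints_cases)
  have "real (a i) = real (\<Sum>v\<in>f i. \<mu> v)" for i
    using w sub \<mu> by (auto simp: real_weights_def intro!: sum.cong)
  then have "a = (\<lambda>i. \<Sum>v\<in>f i. \<mu> v)" by (simp only: of_nat_eq_iff) (rule ext)
  moreover have "real t = real (\<Sum>v\<in>V. \<mu> v)"
    using w \<mu> by (auto simp: real_weights_def intro!: sum.cong)
  then have "t = (\<Sum>v\<in>V. \<mu> v)" by (simp only: of_nat_eq_iff)
  ultimately show ?thesis unfolding vertex_monoid_iff[OF fin sub] by blast
qed

lemma cone_point_dichotomy:
  assumes fin: "finite V" and sub: "\<forall>x. f x \<subseteq> V" and conn: "skel_connected V f"
    and cyc: "skel_has_odd_cycle f" and w: "real_weights V f a t l"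
  shows "(a, t) \<in> vertex_monoid V f \<or> (\<forall>v\<in>V. half_odd (l v))"
proof -
  have "l u + l w \<in> \<int>" if uw: "skel_adj f u w" for u w
  proof -
    obtain i where "f i = {u, w}" "u \<noteq> w" using skel_adj_edge[OF uw] by blast
    then have "l u + l w = real (a i)" using w by (simp add: real_weights_def)
    then show ?thesis by simp
  qed
  then show ?thesis
    using skeleton_parity[OF sub conn cyc] integral_weights_vertex_monoid[OF fin sub w] by blast
qed

(* Every lattice point of P_H is a vertex: half-odd weights would sum to at least |V|/2 > 1. *)
lemma height_one_cone_points:
  assumes fin: "finite V" and sub: "\<forall>x. f x \<subseteq> V" and sep: "separated V f"
    and conn: "skel_connected V f" and cyc: "skel_has_odd_cycle f"
    and at: "(a, 1) \<in> cone_points V f"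
  shows "(a, 1) \<in> vertex_monoid V f"
proof (rule ccontr)
  obtain l where w: "real_weights V f a 1 l" using cone_point_real_weights[OF fin sub sep at] by blast
  assume "(a, 1) \<notin> vertex_monoid V f"
  then have "\<forall>v\<in>V. half_odd (l v)" using cone_point_dichotomy[OF fin sub conn cyc w] by blast
  then have "(\<Sum>v\<in>V. (1/2::real)) \<le> (\<Sum>v\<in>V. l v)"
    using w by (intro sum_mono half_odd_nonneg_ge) (auto simp: real_weights_def)
  then have "real (card V) \<le> 2" using w by (simp add: real_weights_def)
  then show False using card_ge_3_of_odd_cycle[OF sub fin cyc] by simp
qed

(* Under (1) or (2), half-odd weights are impossible, so M_A \<subseteq> M_K. *)
lemma cone_points_in_vertex_monoid:
  assumes fin: "finite V" and sub: "\<forall>x. f x \<subseteq> V" and sep: "separated V f"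
    and conn: "skel_connected V f" and cyc: "skel_has_odd_cycle f"
    and cond: "odd (card V) \<or> (\<exists>E\<in>hedges f. odd (card E))"
    and at: "(a, t) \<in> cone_points V f"
  shows "(a, t) \<in> vertex_monoid V f"
proof (rule ccontr)
  obtain l where w: "real_weights V f a t l" using cone_point_real_weights[OF fin sub sep at] by blast
  assume "(a, t) \<notin> vertex_monoid V f"
  then have half: "\<forall>v\<in>V. half_odd (l v)" using cone_point_dichotomy[OF fin sub conn cyc w] by blast
  have "even (card V)"
    using half_odd_integral_sum_even[OF fin half] w by (simp add: real_weights_def)
  moreover have "even (card (f i))" for i
  proof -
    have "finite (f i)" using fin sub finite_subset by blast
    then show ?thesis
      using half_odd_integral_sum_even[of "f i" l "a i"] half sub w by (auto simp: real_weights_def)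
  qed
  ultimately show False using cond unfolding hedges_def by auto
qed

(* If |V| and all edges are even, the uniform weight 1/2 gives a point of M_A outside M_K:
   a natural weighting \<mu> of it would satisfy \<mu>(u)+\<mu>(w) = 1 on skeleton edges, which an odd
   cycle forbids (apply the parity argument to \<mu>/2 + 1/4). *)
lemma uniform_half_point:
  assumes fin: "finite V" and sub: "\<forall>x. f x \<subseteq> V"
    and conn: "skel_connected V f" and cyc: "skel_has_odd_cycle f"
    and evV: "even (card V)" and evE: "\<forall>E\<in>hedges f. even (card E)"
  shows "((\<lambda>i. card (f i) div 2), card V div 2) \<in> cone_points V f - vertex_monoid V f"
    (is "(?a, ?t) \<in> _")
proof
  have evf: "even (card (f i))" for i
    using evE by (cases "f i = {}") (auto simp: hedges_def)
  have half: "real (card W div 2) = (\<Sum>v\<in>W. 1/2)" if "even (card W)" for W :: "'v set"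
    using that by (auto elim!: evenE)
  have "real_weights V f ?a ?t (\<lambda>_. 1/2)"
    unfolding real_weights_def half[OF evV] half[OF evf] by simp
  then show "(?a, ?t) \<in> cone_points V f"
    by (rule real_weights_cone_point[OF fin sub skel_connected_nonempty[OF conn]])
  show "(?a, ?t) \<notin> vertex_monoid V f"
  proof
    assume "(?a, ?t) \<in> vertex_monoid V f"
    then obtain \<mu> where \<mu>: "?a = (\<lambda>i. \<Sum>v\<in>f i. \<mu> v)"
      using vertex_monoid_iff[OF fin sub] by blast
    define h where "h = (\<lambda>v. real (\<mu> v) / 2 + 1/4)"
    have "h u + h w \<in> \<int>" if uw: "skel_adj f u w" for u w
    proof -
      obtain i where i: "f i = {u, w}" "u \<noteq> w" using skel_adj_edge[OF uw] by blast
      then have "\<mu> u + \<mu> w = 1" using fun_cong[OF \<mu>, of i] by simp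
      then have "h u + h w = 1" unfolding h_def by (simp add: field_simps flip: of_nat_add)
      then show ?thesis by simp
    qed
    then obtain c where "2 * h c \<in> \<int>" using odd_cycle_half_integral[OF sub cyc] by blast
    then obtain k where "2 * h c = of_int k" by (auto elim: Ints_cases)
    then have "real_of_int (2 * int (\<mu> c) + 1) = real_of_int (2 * k)"
      unfolding h_def by (simp add: algebra_simps)
    then have "2 * int (\<mu> c) + 1 = 2 * k" by (simp only: of_int_eq_iff)
    then show False by presburger
  qed
qed

lemma cone_points_eq_vertex_monoid_iff:
  assumes fin: "finite V" and sub: "\<forall>x. f x \<subseteq> V" and sep: "separated V f"
    and conn: "skel_connected V f" and cyc: "skel_has_odd_cycle f"
  shows "cone_points V f = vertex_monoid V f \<longleftrightarrow> (odd (card V) \<or> (\<exists>E\<in>hedges f. odd (card E)))"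
proof
  assume "cone_points V f = vertex_monoid V f"
  then show "odd (card V) \<or> (\<exists>E\<in>hedges f. odd (card E))"
    using uniform_half_point[OF fin sub conn cyc] by blast
next
  assume cond: "odd (card V) \<or> (\<exists>E\<in>hedges f. odd (card E))"
  show "cone_points V f = vertex_monoid V f"
    using cone_points_in_vertex_monoid[OF assms cond]
          vertex_monoid_cone_points[OF fin sub skel_connected_nonempty[OF conn]] by auto
qed


section \<open>The two rings as monomial algebras\<close>

lemma A_H_supported:
  "(A_H V f :: ('x::finite,'k::field) spoly set) =
     {p. Poly_Mapping.keys p \<subseteq> case_prod expo ` cone_points V f}"
proof -
  have "{monom_xy a t | a t. rpt a \<in> (\<lambda>z. real t *\<^sub>R z) ` polytope_H V f}
      = {Poly_Mapping.single m (1::'k) | m. m \<in> case_prod expo ` cone_points V f}"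
    unfolding monom_xy_def cone_points_def by auto
  then show ?thesis unfolding A_H_def ehrhart_ring_def by (simp add: kspan_monomials)
qed

lemma vertex_monoid_monomial_in_kalg:
  "(a, t) \<in> vertex_monoid V f \<Longrightarrow>
     (monom_xy a t :: ('x::finite,'k::field) spoly) \<in> kalg {monom_xy b 1 | b. rpt b \<in> polytope_H V f}"
proof (induction rule: vertex_monoid.induct)
  case zero
  then show ?case using kalg.const[of 1] by (simp add: monom_xy_def expo_zero)
next
  case (step a t v)
  have "rpt (vertex_exp f v) \<in> polytope_H V f"
    using step(2) unfolding rpt_vertex_exp polytope_H_def by (rule hull_inc[OF imageI])
  then have "(monom_xy (vertex_exp f v) 1 :: ('x,'k) spoly) \<in> kalg {monom_xy b 1 | b. rpt b \<in> polytope_H V f}"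
    by (blast intro: kalg.gen)
  from kalg.mult[OF step.IH this] show ?case by (simp add: monom_xy_mult)
qed

lemma kH_supported:
  assumes fin: "finite V" and sub: "\<forall>x. f x \<subseteq> V" and sep: "separated V f"
    and conn: "skel_connected V f" and cyc: "skel_has_odd_cycle f"
  shows "(kH V f :: ('x::finite,'k::field) spoly set) =
           {p. Poly_Mapping.keys p \<subseteq> case_prod expo ` vertex_monoid V f}"
  unfolding kH_def polytopal_ring_def
proof (rule kalg_monomials)
  show "0 \<in> case_prod expo ` vertex_monoid V f"
    using vertex_monoid.zero expo_zero by force
  show "m + n \<in> case_prod expo ` vertex_monoid V f"
    if "m \<in> case_prod expo ` vertex_monoid V f" "n \<in> case_prod expo ` vertex_monoid V f" for m n
    using that vertex_monoid_add by (force simp: expo_add)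
  show "\<exists>m\<in>case_prod expo ` vertex_monoid V f. g = Poly_Mapping.single m 1"
    if gen: "g \<in> {monom_xy a 1 | a. rpt a \<in> polytope_H V f}" for g :: "('x,'k) spoly"
  proof -
    obtain a where a: "g = monom_xy a 1" "rpt a \<in> polytope_H V f" using gen by blast
    then have "(a, 1) \<in> cone_points V f" unfolding cone_points_def by force
    then have "(a, 1) \<in> vertex_monoid V f" by (rule height_one_cone_points[OF assms])
    then show ?thesis using a unfolding monom_xy_def by force
  qed
  show "Poly_Mapping.single m 1 \<in> kalg {monom_xy a 1 | a. rpt a \<in> polytope_H V f}"
    if "m \<in> case_prod expo ` vertex_monoid V f" for m
    using that vertex_monoid_monomial_in_kalg unfolding monom_xy_def by force
qed


theorem theorem4p1:
  fixes V :: "'v set" and f :: "'x::finite \<Rightarrow> 'v set"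
  assumes "finite V"
    and "\<forall>x. f x \<subseteq> V"
    and "separated V f"
    and "skel_connected V f"
    and "skel_has_odd_cycle f"
  shows "(A_H V f = (kH V f :: ('x, 'k::field) spoly set)) \<longleftrightarrow>
           (odd (card V) \<or> (\<exists>E\<in>hedges f. odd (card E)))"
proof -
  have "(A_H V f = (kH V f :: ('x, 'k) spoly set)) \<longleftrightarrow>
          case_prod expo ` cone_points V f = case_prod expo ` vertex_monoid V f"
    by (simp only: A_H_supported kH_supported[OF assms] supported_polys_eq_iff)
  also have "\<dots> \<longleftrightarrow> cone_points V f = vertex_monoid V f"
    by (rule inj_image_eq_iff[OF inj_expo])
  also have "\<dots> \<longleftrightarrow> (odd (card V) \<or> (\<exists>E\<in>hedges f. odd (card E)))"
    by (rule cone_points_eq_vertex_monoid_iff[OF assms])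
  finally show ?thesis .
qed

end
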